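(* The map $[0,\infty)\to\mathbb R$, $r\mapsto\sqrt{r\tanh(r)}$, is concave and possesses an extension $F:\mathbb R\to\mathbb R$ which is analytic, increasing and odd, such that $F'$ does not vanish on $\mathbb R$ and $F''$ vanishes only at the origin, where it has a simple zero. *)

theory Defs
  imports "HOL-Analysis.Analysis"
begin

definition real_analytic_on :: "(real \<Rightarrow> real) \<Rightarrow> real set \<Rightarrow> bool" where
  "real_analytic_on F S \<longleftrightarrow>
     (\<forall>x\<in>S. \<exists>a :: nat \<Rightarrow> real. \<exists>\<rho>>0.
        \<forall>y. \<bar>y - x\<bar> < \<rho> \<longrightarrow> (\<lambda>n. a n * (y - x) ^ n) sums F y)"

end

theory Submission
  imports Defs "HOL-Complex_Analysis.Complex_Analysis"
begin

text \<open>
  On the real line the odd extension is \<open>x \<mapsto> x * sqrt (tanh x / x)\<close>, the restriction of a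
  function holomorphic near \<open>\<real>\<close>, since \<open>tanh z / z\<close> has a removable singularity at 0 and is
  positive on \<open>\<real>\<close>; this gives analyticity. Differentiating \<open>F\<^sup>2 = g\<close> with \<open>g x = x * tanh x\<close>
  twice yields \<open>4 F\<^sup>3 F'' = 2 g g'' - g'\<^sup>2 = -(t - x s)\<^sup>2 - 4 x\<^sup>2 t\<^sup>2 s\<close> with \<open>t = tanh x\<close>,
  \<open>s = 1 - t\<^sup>2\<close>, which is negative for \<open>x \<noteq> 0\<close>: so \<open>F''\<close> has the sign opposite to \<open>F\<close>.
  Differentiating further and evaluating at 0 gives \<open>F'(0)\<^sup>2 = 1\<close>, \<open>F''(0) = 0\<close> and
  \<open>F'(0) F'''(0) = -1\<close>.
\<close>

lemma has_real_derivative_Re_of_real: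
  assumes "H holomorphic_on S" "open S" "complex_of_real x \<in> S"
  shows "((\<lambda>t. Re (H (of_real t))) has_real_derivative Re (deriv H (of_real x))) (at x)"
proof -
  have "(H has_field_derivative deriv H (of_real x)) (at (of_real x))"
    by (rule holomorphic_derivI[OF assms])
  then have "((\<lambda>t. H (of_real t)) has_vector_derivative deriv H (of_real x)) (at x)"
    by (rule has_vector_derivative_real_field)
  then show ?thesis by (rule has_field_derivative_Re)
qed

lemma higher_deriv_Re_of_real:
  assumes "H holomorphic_on S" "open S" "\<real> \<subseteq> S"
  shows "(deriv ^^ n) (\<lambda>t. Re (H (of_real t))) = (\<lambda>t. Re ((deriv ^^ n) H (of_real t)))"
proof (induction n)
  case 0
  show ?case by simp
next
  case (Suc n)
  have "(deriv ^^ n) H holomorphic_on S"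
    by (rule holomorphic_higher_deriv[OF assms(1,2)])
  with assms(2,3) show ?case
    by (auto simp: Suc intro!: ext DERIV_imp_deriv has_real_derivative_Re_of_real)
qed

lemma real_analytic_on_Re_of_real:
  assumes "H holomorphic_on S" "open S" "\<And>x. x \<in> A \<Longrightarrow> complex_of_real x \<in> S"
  shows "real_analytic_on (\<lambda>t. Re (H (of_real t))) A"
  unfolding real_analytic_on_def
proof
  fix x assume "x \<in> A"
  then obtain r where r: "r > 0" "ball (complex_of_real x) r \<subseteq> S"
    using assms(2,3) open_contains_ball by blast
  have H_ball: "H holomorphic_on ball (of_real x) r"
    using assms(1) r(2) holomorphic_on_subset by blast
  show "\<exists>a. \<exists>\<rho>>0. \<forall>y. \<bar>y - x\<bar> < \<rho> \<longrightarrow> (\<lambda>n. a n * (y - x) ^ n) sums Re (H (of_real y))"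
  proof (intro exI[of _ "\<lambda>n. Re ((deriv ^^ n) H (of_real x) / fact n)"] exI[of _ r] conjI allI impI r)
    fix y :: real assume "\<bar>y - x\<bar> < r"
    then have "of_real y \<in> ball (complex_of_real x) r"
      by (simp add: dist_norm flip: of_real_diff)
    have "Re ((deriv ^^ n) H (of_real x) / fact n * (of_real y - of_real x) ^ n) =
          Re ((deriv ^^ n) H (of_real x) / fact n) * (y - x) ^ n" for n
      by (simp only: flip: of_real_diff of_real_power) (subst times_complex.sel, simp)
    with sums_Re[OF holomorphic_power_series[OF H_ball \<open>of_real y \<in> _\<close>]]
    show "(\<lambda>n. Re ((deriv ^^ n) H (of_real x) / fact n) * (y - x) ^ n) sums Re (H (of_real y))"
      by (simp only:)
  qed
qed

definition tanhc :: "complex \<Rightarrow> complex" where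
  "tanhc z = (if z = 0 then 1 else tanh z / z)"

lemma tanh_of_real: "tanh (complex_of_real x) = of_real (tanh x)"
  by (simp add: tanh_def sinh_field_def cosh_field_def exp_of_real flip: of_real_minus)

lemma cosh_of_real: "cosh (complex_of_real x) = of_real (cosh x)"
  by (simp add: cosh_field_def exp_of_real flip: of_real_minus)

lemma tanhc_of_real: "tanhc (of_real x) = of_real (if x = 0 then 1 else tanh x / x)"
  by (simp add: tanhc_def tanh_of_real)

lemma tanh_div_self_pos: "x \<noteq> 0 \<Longrightarrow> tanh x / x > (0::real)"
  by (cases "x > 0") (auto intro: divide_neg_neg)

lemma open_cosh_nonzero: "open {z::complex. cosh z \<noteq> 0}"
  by (intro open_Collect_neq continuous_intros)

lemma tanhc_holomorphic: "tanhc holomorphic_on {z. cosh z \<noteq> 0}"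
proof -
  let ?U = "{z::complex. cosh z \<noteq> 0}"
  have "0 \<in> interior ?U" using open_cosh_nonzero by (simp add: interior_open)
  moreover have "tanh holomorphic_on ?U"
    unfolding holomorphic_on_def field_differentiable_def
    by (auto intro!: derivative_eq_intros)
  moreover have "deriv tanh (0::complex) = 1"
    by (rule DERIV_imp_deriv) (auto intro!: derivative_eq_intros)
  moreover have "(\<lambda>z. if z = 0 then deriv tanh 0 else (tanh z - tanh 0) / (z - 0)) = tanhc"
    by (auto simp: \<open>deriv tanh 0 = 1\<close> tanhc_def)
  ultimately show ?thesis
    using pole_lemma[of tanh ?U 0] by simp
qed

lemma holomorphic_sqrt_z_tanh:
  obtains S where "open S" "\<real> \<subseteq> S" "(\<lambda>z. z * csqrt (tanhc z)) holomorphic_on S"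
proof
  let ?S = "{z. cosh z \<noteq> 0} \<inter> tanhc -` (- \<real>\<^sub>\<le>\<^sub>0)"
  show "open ?S"
    by (rule continuous_open_preimage[OF holomorphic_on_imp_continuous_on[OF tanhc_holomorphic]
          open_cosh_nonzero]) (simp add: open_Compl)
  show "\<real> \<subseteq> ?S"
  proof
    fix z :: complex assume "z \<in> \<real>"
    then obtain x where z: "z = of_real x" by (auto elim: Reals_cases)
    have "cosh z \<noteq> 0"
      unfolding z cosh_of_real by simp
    moreover have "tanhc z \<notin> \<real>\<^sub>\<le>\<^sub>0"
      using tanh_div_self_pos[of x] by (auto simp: z tanhc_of_real nonpos_Reals_def)
    ultimately show "z \<in> ?S" by simp
  qed
  have "tanhc holomorphic_on ?S"
    by (rule holomorphic_on_subset[OF tanhc_holomorphic]) blast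
  then show "(\<lambda>z. z * csqrt (tanhc z)) holomorphic_on ?S"
    by (intro holomorphic_on_mult holomorphic_on_ident holomorphic_on_csqrt') auto
qed

definition odd_sqrt_x_tanh :: "real \<Rightarrow> real" where
  "odd_sqrt_x_tanh x = sgn x * sqrt (x * tanh x)"

lemma x_tanh_nonneg: "0 \<le> x * tanh (x::real)"
  by (cases "x \<ge> 0") (auto intro: mult_nonpos_nonpos)

lemma odd_sqrt_x_tanh_square: "odd_sqrt_x_tanh x * odd_sqrt_x_tanh x = x * tanh x"
  using x_tanh_nonneg[of x] by (auto simp: odd_sqrt_x_tanh_def sgn_if)

lemma odd_sqrt_x_tanh_nonneg: "x \<ge> 0 \<Longrightarrow> odd_sqrt_x_tanh x = sqrt (x * tanh x)"
  by (cases "x = 0") (auto simp: odd_sqrt_x_tanh_def)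

lemma odd_sqrt_x_tanh_minus: "odd_sqrt_x_tanh (- x) = - odd_sqrt_x_tanh x"
  by (simp add: odd_sqrt_x_tanh_def)

lemma odd_sqrt_x_tanh_pos: "x > 0 \<Longrightarrow> odd_sqrt_x_tanh x > 0"
  by (simp add: odd_sqrt_x_tanh_def)

lemma odd_sqrt_x_tanh_eq_Re:
  "odd_sqrt_x_tanh = (\<lambda>t. Re (of_real t * csqrt (tanhc (of_real t))))"
proof
  fix x :: real
  show "odd_sqrt_x_tanh x = Re (of_real x * csqrt (tanhc (of_real x)))"
  proof (cases "x = 0")
    case False
    have "x * tanh x = x\<^sup>2 * (tanh x / x)"
      using False by (simp add: power2_eq_square)
    then have "sqrt (x * tanh x) = \<bar>x\<bar> * sqrt (tanh x / x)"
      by (simp only: real_sqrt_mult real_sqrt_abs)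
    then have "odd_sqrt_x_tanh x = sgn x * \<bar>x\<bar> * sqrt (tanh x / x)"
      by (simp add: odd_sqrt_x_tanh_def)
    then show ?thesis
      using False tanh_div_self_pos[OF False]
      by (simp add: tanhc_of_real csqrt_of_real sgn_mult_abs)
  qed (simp add: odd_sqrt_x_tanh_def)
qed

lemma odd_sqrt_x_tanh_analytic: "real_analytic_on odd_sqrt_x_tanh UNIV"
proof -
  obtain S where "open S" "\<real> \<subseteq> S" "(\<lambda>z. z * csqrt (tanhc z)) holomorphic_on S"
    by (rule holomorphic_sqrt_z_tanh)
  then show ?thesis
    unfolding odd_sqrt_x_tanh_eq_Re by (intro real_analytic_on_Re_of_real) auto
qed

lemma odd_sqrt_x_tanh_higher_deriv:
  "((deriv ^^ k) odd_sqrt_x_tanh has_real_derivative (deriv ^^ Suc k) odd_sqrt_x_tanh x) (at x)"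
proof -
  obtain S where S: "open S" "\<real> \<subseteq> S" "(\<lambda>z. z * csqrt (tanhc z)) holomorphic_on S"
    by (rule holomorphic_sqrt_z_tanh)
  have "(deriv ^^ k) (\<lambda>z. z * csqrt (tanhc z)) holomorphic_on S"
    by (rule holomorphic_higher_deriv[OF S(3,1)])
  moreover have "complex_of_real x \<in> S"
    using S(2) by auto
  ultimately show ?thesis
    unfolding odd_sqrt_x_tanh_eq_Re higher_deriv_Re_of_real[OF S(3,1,2)]
    using has_real_derivative_Re_of_real[OF _ S(1)] by simp
qed

lemma sech_squared_pos: "1 - (tanh x)\<^sup>2 > (0::real)"
  using tanh_real_bounds[of x] by (simp add: abs_square_less_1 abs_less_iff)

locale smooth_root_x_tanh =
  fixes D :: "nat \<Rightarrow> real \<Rightarrow> real"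
  assumes D_square: "\<And>x. D 0 x * D 0 x = x * tanh x"
    and D_deriv: "\<And>k x. (D k has_real_derivative D (Suc k) x) (at x)"
begin

lemma D_identity_1: "2 * (D 0 x * D 1 x) = tanh x + x * (1 - (tanh x)\<^sup>2)"
proof (rule DERIV_unique)
  show "((\<lambda>x. D 0 x * D 0 x) has_real_derivative 2 * (D 0 x * D 1 x)) (at x)"
    by (auto intro!: derivative_eq_intros D_deriv simp: algebra_simps)
  show "((\<lambda>x. D 0 x * D 0 x) has_real_derivative tanh x + x * (1 - (tanh x)\<^sup>2)) (at x)"
    unfolding D_square by (auto intro!: derivative_eq_intros)
qed

lemma D_identity_2:
  "2 * (D 1 x * D 1 x + D 0 x * D 2 x) = 2 * (1 - (tanh x)\<^sup>2) * (1 - x * tanh x)"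
proof (rule DERIV_unique)
  show "((\<lambda>x. 2 * (D 0 x * D 1 x)) has_real_derivative
          2 * (D 1 x * D 1 x + D 0 x * D 2 x)) (at x)"
    by (auto intro!: derivative_eq_intros D_deriv simp: algebra_simps eval_nat_numeral)
  show "((\<lambda>x. 2 * (D 0 x * D 1 x)) has_real_derivative
          2 * (1 - (tanh x)\<^sup>2) * (1 - x * tanh x)) (at x)"
    unfolding D_identity_1
    by (auto intro!: derivative_eq_intros simp: algebra_simps power2_eq_square)
qed

lemma D_identity_3:
  "2 * (3 * (D 1 x * D 2 x) + D 0 x * D 3 x) =
     - 4 * tanh x * (1 - (tanh x)\<^sup>2) * (1 - x * tanh x)
     - 2 * (1 - (tanh x)\<^sup>2) * (tanh x + x * (1 - (tanh x)\<^sup>2))"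
proof (rule DERIV_unique)
  show "((\<lambda>x. 2 * (D 1 x * D 1 x + D 0 x * D 2 x)) has_real_derivative
          2 * (3 * (D 1 x * D 2 x) + D 0 x * D 3 x)) (at x)"
    by (auto intro!: derivative_eq_intros D_deriv simp: algebra_simps eval_nat_numeral)
  show "((\<lambda>x. 2 * (D 1 x * D 1 x + D 0 x * D 2 x)) has_real_derivative
          - 4 * tanh x * (1 - (tanh x)\<^sup>2) * (1 - x * tanh x)
          - 2 * (1 - (tanh x)\<^sup>2) * (tanh x + x * (1 - (tanh x)\<^sup>2))) (at x)"
    unfolding D_identity_2
    by (auto intro!: derivative_eq_intros simp: algebra_simps power2_eq_square)
qed

lemma D_identity_4_at_0: "2 * (3 * (D 2 0 * D 2 0) + 4 * (D 1 0 * D 3 0) + D 0 0 * D 4 0) = -8"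
proof (rule DERIV_unique)
  show "((\<lambda>x. 2 * (3 * (D 1 x * D 2 x) + D 0 x * D 3 x)) has_real_derivative
          2 * (3 * (D 2 0 * D 2 0) + 4 * (D 1 0 * D 3 0) + D 0 0 * D 4 0)) (at 0)"
    by (auto intro!: derivative_eq_intros D_deriv simp: algebra_simps eval_nat_numeral)
  show "((\<lambda>x. 2 * (3 * (D 1 x * D 2 x) + D 0 x * D 3 x)) has_real_derivative -8) (at 0)"
    unfolding D_identity_3 by (auto intro!: derivative_eq_intros)
qed

lemma D_0_at_0: "D 0 0 = 0"
  using D_square[of 0] by simp

lemma D_1_at_0: "D 1 0 * D 1 0 = 1"
  using D_identity_2[of 0] by (simp add: D_0_at_0)

lemma D_2_at_0: "D 2 0 = 0"
  using D_identity_3[of 0] D_1_at_0 by (auto simp: D_0_at_0)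

lemma D_3_at_0: "D 1 0 * D 3 0 = -1"
  using D_identity_4_at_0 by (simp add: D_0_at_0 D_2_at_0)

lemma D_1_nonzero: "D 1 x \<noteq> 0"
proof (cases x "0::real" rule: linorder_cases)
  case less
  then have "tanh x + x * (1 - (tanh x)\<^sup>2) < 0"
    using sech_squared_pos[of x] by (simp add: add_neg_neg mult_neg_pos)
  then show ?thesis using D_identity_1[of x] by auto
next
  case equal
  then show ?thesis using D_1_at_0 by auto
next
  case greater
  then have "tanh x + x * (1 - (tanh x)\<^sup>2) > 0"
    using sech_squared_pos[of x] by (simp add: add_pos_pos)
  then show ?thesis using D_identity_1[of x] by auto
qed

lemma D_0_times_D_2_neg:
  assumes "x \<noteq> 0"
  shows "D 0 x * D 2 x < 0"
proof -
  define t s where "t = tanh x" and "s = 1 - t\<^sup>2"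
  have "4 * (D 0 x * D 0 x) * (D 0 x * D 2 x)
      = 2 * (D 0 x * D 0 x) * (2 * (D 1 x * D 1 x + D 0 x * D 2 x)) - (2 * (D 0 x * D 1 x))\<^sup>2"
    by (simp add: algebra_simps power2_eq_square)
  also have "\<dots> = 2 * (x * t) * (2 * s * (1 - x * t)) - (t + x * s)\<^sup>2"
    unfolding D_square D_identity_1 D_identity_2 t_def s_def ..
  also have "\<dots> = - ((t - x * s)\<^sup>2 + 4 * x\<^sup>2 * t\<^sup>2 * s)"
    by (simp add: algebra_simps power2_eq_square)
  also have "\<dots> < 0"
  proof -
    have "4 * x\<^sup>2 * t\<^sup>2 * s > 0"
      using assms sech_squared_pos[of x] by (simp add: t_def s_def)
    then show ?thesis using zero_le_power2[of "t - x * s"] by linarith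
  qed
  finally have "(D 0 x * D 0 x) * (D 0 x * D 2 x) < 0" by simp
  moreover have "D 0 x * D 0 x > 0"
    using D_square[of x] assms x_tanh_nonneg[of x] not_real_square_gt_zero by fastforce
  ultimately show ?thesis by (simp add: mult_less_0_iff)
qed

end

interpretation odd_sqrt_x_tanh: smooth_root_x_tanh "\<lambda>k. (deriv ^^ k) odd_sqrt_x_tanh"
  by unfold_locales (simp add: odd_sqrt_x_tanh_square, rule odd_sqrt_x_tanh_higher_deriv)

lemma strict_mono_odd:
  fixes f :: "real \<Rightarrow> real"
  assumes mono: "strict_mono_on {0..} f" and odd: "\<And>x. f (- x) = - f x"
  shows "strict_mono f"
proof (rule strict_monoI)
  have f0: "f 0 = 0" using odd[of 0] by simp
  fix x y :: real assume "x < y"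
  consider "0 \<le> x" | "x < 0" "0 \<le> y" | "y < 0" by linarith
  then show "f x < f y"
  proof cases
    case 1
    with \<open>x < y\<close> show ?thesis using mono by (auto intro: strict_mono_onD)
  next
    case 2
    then have "f x < f 0" "f 0 \<le> f y"
      using mono odd[of x] f0 strict_mono_onD[OF mono, of 0 "- x"]
        strict_mono_on_leD[OF mono, of 0 y] by auto
    then show ?thesis by simp
  next
    case 3
    with \<open>x < y\<close> have "f (- y) < f (- x)" using mono by (auto intro: strict_mono_onD)
    then show ?thesis using odd by simp
  qed
qed

lemma x_tanh_strict_mono_on: "strict_mono_on {0..} (\<lambda>x::real. x * tanh x)"
proof (rule strict_mono_onI)
  fix a b :: real assume "a \<in> {0..}" "b \<in> {0..}" "a < b"
  then have "a * tanh a \<le> a * tanh b" by (intro mult_left_mono) auto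
  also have "\<dots> < b * tanh b" using \<open>a \<in> {0..}\<close> \<open>a < b\<close> by (intro mult_strict_right_mono) auto
  finally show "a * tanh a < b * tanh b" .
qed

lemma odd_sqrt_x_tanh_strict_mono: "strict_mono odd_sqrt_x_tanh"
proof (rule strict_mono_odd)
  show "strict_mono_on {0..} odd_sqrt_x_tanh"
    using x_tanh_strict_mono_on by (auto simp: strict_mono_on_def odd_sqrt_x_tanh_nonneg)
qed (rule odd_sqrt_x_tanh_minus)

lemma concave_on_cong: "(\<And>x. x \<in> S \<Longrightarrow> f x = g x) \<Longrightarrow> concave_on S f = concave_on S g"
  by (auto simp: concave_on_def convex_on_def convex_def)

lemma odd_sqrt_x_tanh_concave: "concave_on {0..} odd_sqrt_x_tanh"
proof -
  let ?D = "\<lambda>k. (deriv ^^ k) odd_sqrt_x_tanh"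
  show ?thesis
  proof (rule f''_le0_imp_concave[where f' = "?D 1" and f'' = "?D 2"])
    fix x :: real assume "x \<in> {0..}"
    then show "?D 2 x \<le> 0"
      using odd_sqrt_x_tanh.D_2_at_0 odd_sqrt_x_tanh.D_0_times_D_2_neg[of x] odd_sqrt_x_tanh_pos[of x]
      by (cases "x = 0") (auto simp: mult_less_0_iff)
  qed (use odd_sqrt_x_tanh_higher_deriv[of 0] odd_sqrt_x_tanh_higher_deriv[of 1]
       in \<open>auto simp: eval_nat_numeral\<close>)
qed

theorem lemma3p2:
  shows "concave_on {0..} (\<lambda>r::real. sqrt (r * tanh r)) \<and>
    (\<exists>F :: real \<Rightarrow> real.
        (\<forall>r\<ge>0. F r = sqrt (r * tanh r)) \<and>
        real_analytic_on F UNIV \<and>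
        strict_mono F \<and>
        (\<forall>x. F (- x) = - F x) \<and>
        (\<forall>x. deriv F x \<noteq> 0) \<and>
        (\<forall>x. deriv (deriv F) x = 0 \<longleftrightarrow> x = 0) \<and>
        deriv (deriv (deriv F)) 0 \<noteq> 0)"
proof (intro conjI exI[of _ odd_sqrt_x_tanh] allI impI)
  let ?F = odd_sqrt_x_tanh
  show "concave_on {0..} (\<lambda>r::real. sqrt (r * tanh r))"
    by (rule concave_on_cong[THEN iffD1, OF _ odd_sqrt_x_tanh_concave])
      (simp add: odd_sqrt_x_tanh_nonneg)
  show "?F r = sqrt (r * tanh r)" if "r \<ge> 0" for r
    using that by (rule odd_sqrt_x_tanh_nonneg)
  show "real_analytic_on ?F UNIV" by (rule odd_sqrt_x_tanh_analytic)
  show "strict_mono ?F" by (rule odd_sqrt_x_tanh_strict_mono)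
  show "?F (- x) = - ?F x" for x by (rule odd_sqrt_x_tanh_minus)
  show "deriv ?F x \<noteq> 0" for x
    using odd_sqrt_x_tanh.D_1_nonzero by simp
  show "deriv (deriv ?F) x = 0 \<longleftrightarrow> x = 0" for x
    using odd_sqrt_x_tanh.D_2_at_0 odd_sqrt_x_tanh.D_0_times_D_2_neg[of x]
    by (cases "x = 0") (auto simp: eval_nat_numeral)
  show "deriv (deriv (deriv ?F)) 0 \<noteq> 0"
    using odd_sqrt_x_tanh.D_3_at_0 by (auto simp: eval_nat_numeral)
qed

end
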